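(* Let $S=\mathbb{N}_\wedge$. Then $T=\begin{pmatrix}\ell^{1}(S)^{**}&\ell^{1}(S)^{**}\\0&\ell^{1}(S)^{**}\end{pmatrix}$ is not approximately biprojective.
   Context: $\mathbb{N}_\wedge$ is $\mathbb{N}$ with operation $m\wedge n=\min\{m,n\}$; $\ell^1(S)^{**}$ carries the first Arens product. For a Banach algebra $A$, $T=\begin{pmatrix}A&A\\0&A\end{pmatrix}$ is the algebra of upper triangular matrices with entries in $A$, matrix operations and norm $\|a\|+\|x\|+\|b\|$. A Banach algebra $B$ is approximately biprojective if there is a net $(\rho_\alpha)$ of continuous $B$-bimodule morphisms $B\to B\otimes_pB$ with $\pi_B\circ\rho_\alpha(b)\to b$ for all $b$, where $\pi_B(b\otimes c)=bc$. *)

theory Defs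
  imports "HOL-Analysis.Analysis"
begin

record 'a cbalg =
  ba_carr :: "'a set"
  ba_add  :: "'a \<Rightarrow> 'a \<Rightarrow> 'a"
  ba_smul :: "complex \<Rightarrow> 'a \<Rightarrow> 'a"
  ba_mul  :: "'a \<Rightarrow> 'a \<Rightarrow> 'a"
  ba_nrm  :: "'a \<Rightarrow> real"

text \<open>Bounded complex-bilinear forms on B x B (the dual of the projective tensor product).\<close>
definition bil_forms :: "'a cbalg \<Rightarrow> ('a \<Rightarrow> 'a \<Rightarrow> complex) set" where
  "bil_forms B = {\<phi>.
     (\<forall>x\<in>ba_carr B. \<forall>y\<in>ba_carr B. \<forall>z\<in>ba_carr B. \<forall>c.
        \<phi> (ba_add B x z) y = \<phi> x y + \<phi> z y \<and>
        \<phi> x (ba_add B y z) = \<phi> x y + \<phi> x z \<and>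
        \<phi> (ba_smul B c x) y = c * \<phi> x y \<and>
        \<phi> x (ba_smul B c y) = c * \<phi> x y) \<and>
     (\<exists>K. \<forall>x\<in>ba_carr B. \<forall>y\<in>ba_carr B. cmod (\<phi> x y) \<le> K * ba_nrm B x * ba_nrm B y)}"

definition lin_funcs :: "'a cbalg \<Rightarrow> ('a \<Rightarrow> complex) set" where
  "lin_funcs B = {\<psi>.
     (\<forall>x\<in>ba_carr B. \<forall>y\<in>ba_carr B. \<forall>c.
        \<psi> (ba_add B x y) = \<psi> x + \<psi> y \<and> \<psi> (ba_smul B c x) = c * \<psi> x) \<and>
     (\<exists>K. \<forall>x\<in>ba_carr B. cmod (\<psi> x) \<le> K * ba_nrm B x)}"

text \<open>Elements of the completed projective tensor product are the sums
  \<open>\<Sum> x_n \<otimes> y_n\<close> with \<open>\<Sum> \<parallel>x_n\<parallel>\<parallel>y_n\<parallel> < \<infinity>\<close>; such an element is identified with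
  the functional it induces on bounded bilinear forms (canonical injection into
  the bidual).\<close>
definition tens_rep :: "'a cbalg \<Rightarrow> (nat \<Rightarrow> 'a) \<Rightarrow> (nat \<Rightarrow> 'a) \<Rightarrow> bool" where
  "tens_rep B x y \<longleftrightarrow> (\<forall>n. x n \<in> ba_carr B \<and> y n \<in> ba_carr B) \<and>
     summable (\<lambda>n. ba_nrm B (x n) * ba_nrm B (y n))"

definition tens_of :: "'a cbalg \<Rightarrow> (nat \<Rightarrow> 'a) \<Rightarrow> (nat \<Rightarrow> 'a)
    \<Rightarrow> ('a \<Rightarrow> 'a \<Rightarrow> complex) \<Rightarrow> complex" where
  "tens_of B x y = (\<lambda>\<phi>. if \<phi> \<in> bil_forms B then (\<Sum>n. \<phi> (x n) (y n)) else 0)"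

definition ptens :: "'a cbalg \<Rightarrow> (('a \<Rightarrow> 'a \<Rightarrow> complex) \<Rightarrow> complex) set" where
  "ptens B = {tens_of B x y | x y. tens_rep B x y}"

definition ptnorm :: "'a cbalg \<Rightarrow> (('a \<Rightarrow> 'a \<Rightarrow> complex) \<Rightarrow> complex) \<Rightarrow> real" where
  "ptnorm B u = Inf {(\<Sum>n. ba_nrm B (x n) * ba_nrm B (y n)) | x y.
                       tens_rep B x y \<and> tens_of B x y = u}"

text \<open>Bimodule actions: \<open>a\<cdot>(x\<otimes>y) = (ax)\<otimes>y\<close>, \<open>(x\<otimes>y)\<cdot>a = x\<otimes>(ya)\<close>.\<close>
definition tl_act :: "'a cbalg \<Rightarrow> 'a \<Rightarrow> (('a \<Rightarrow> 'a \<Rightarrow> complex) \<Rightarrow> complex)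
    \<Rightarrow> (('a \<Rightarrow> 'a \<Rightarrow> complex) \<Rightarrow> complex)" where
  "tl_act B a u = (\<lambda>\<phi>. if \<phi> \<in> bil_forms B then u (\<lambda>x y. \<phi> (ba_mul B a x) y) else 0)"

definition tr_act :: "'a cbalg \<Rightarrow> (('a \<Rightarrow> 'a \<Rightarrow> complex) \<Rightarrow> complex) \<Rightarrow> 'a
    \<Rightarrow> (('a \<Rightarrow> 'a \<Rightarrow> complex) \<Rightarrow> complex)" where
  "tr_act B u a = (\<lambda>\<phi>. if \<phi> \<in> bil_forms B then u (\<lambda>x y. \<phi> x (ba_mul B y a)) else 0)"

text \<open>The product map \<open>\<pi>(\<Sum> x_n \<otimes> y_n) = \<Sum> x_n y_n\<close>, characterised weakly
  (bounded functionals separate points).\<close>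
definition tproj :: "'a cbalg \<Rightarrow> (('a \<Rightarrow> 'a \<Rightarrow> complex) \<Rightarrow> complex) \<Rightarrow> 'a" where
  "tproj B u = (THE c. c \<in> ba_carr B \<and>
      (\<forall>\<psi>\<in>lin_funcs B. \<psi> c = u (\<lambda>x y. \<psi> (ba_mul B x y))))"

definition bimod_morph :: "'a cbalg \<Rightarrow> ('a \<Rightarrow> (('a \<Rightarrow> 'a \<Rightarrow> complex) \<Rightarrow> complex)) \<Rightarrow> bool" where
  "bimod_morph B \<rho> \<longleftrightarrow>
     (\<forall>a\<in>ba_carr B. \<rho> a \<in> ptens B) \<and>
     (\<forall>a\<in>ba_carr B. \<forall>b\<in>ba_carr B. \<rho> (ba_add B a b) = (\<lambda>\<phi>. \<rho> a \<phi> + \<rho> b \<phi>)) \<and>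
     (\<forall>a\<in>ba_carr B. \<forall>c. \<rho> (ba_smul B c a) = (\<lambda>\<phi>. c * \<rho> a \<phi>)) \<and>
     (\<exists>K. \<forall>a\<in>ba_carr B. ptnorm B (\<rho> a) \<le> K * ba_nrm B a) \<and>
     (\<forall>a\<in>ba_carr B. \<forall>b\<in>ba_carr B.
        \<rho> (ba_mul B a b) = tl_act B a (\<rho> b) \<and> \<rho> (ba_mul B b a) = tr_act B (\<rho> b) a)"

text \<open>Approximate biprojectivity; the net \<open>(\<rho>_\<alpha>)\<close> is represented by a proper filter
  on maps (nets and filters are interchangeable for convergence).\<close>
definition approx_biprojective :: "'a cbalg \<Rightarrow> bool" where
  "approx_biprojective B \<longleftrightarrow>
     (\<exists>F :: ('a \<Rightarrow> (('a \<Rightarrow> 'a \<Rightarrow> complex) \<Rightarrow> complex)) filter.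
        F \<noteq> bot \<and> eventually (bimod_morph B) F \<and>
        (\<forall>b\<in>ba_carr B.
           ((\<lambda>\<rho>. ba_nrm B (ba_add B (tproj B (\<rho> b)) (ba_smul B (-1) b))) \<longlongrightarrow> 0) F))"

text \<open>\<open>\<ell>\<^sup>\<infinity>(\<nat>) = \<ell>\<^sup>1(\<nat>)\<^sup>*\<close>.\<close>
definition linf :: "(nat \<Rightarrow> complex) set" where
  "linf = {g. bounded (range g)}"

definition supn :: "(nat \<Rightarrow> complex) \<Rightarrow> real" where
  "supn g = (SUP n. cmod (g n))"

text \<open>\<open>\<ell>\<^sup>1(S)\<^sup>*\<^sup>* = \<ell>\<^sup>\<infinity>(S)\<^sup>*\<close>: bounded complex-linear functionals on \<open>\<ell>\<^sup>\<infinity>\<close>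
  (normalised to be 0 off \<open>\<ell>\<^sup>\<infinity>\<close>).\<close>
definition l1bidual :: "((nat \<Rightarrow> complex) \<Rightarrow> complex) set" where
  "l1bidual = {m.
     (\<forall>f\<in>linf. \<forall>g\<in>linf. m (\<lambda>n. f n + g n) = m f + m g) \<and>
     (\<forall>c. \<forall>f\<in>linf. m (\<lambda>n. c * f n) = c * m f) \<and>
     (\<exists>K. \<forall>f\<in>linf. cmod (m f) \<le> K * supn f) \<and>
     (\<forall>f. f \<notin> linf \<longrightarrow> m f = 0)}"

definition bdnorm :: "((nat \<Rightarrow> complex) \<Rightarrow> complex) \<Rightarrow> real" where
  "bdnorm m = (SUP f\<in>{f\<in>linf. supn f \<le> 1}. cmod (m f))"

text \<open>First Arens product on \<open>\<ell>\<^sup>1(\<nat>\<^sub>\<and>)\<^sup>*\<^sup>*\<close>: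
  \<open>\<langle>f\<cdot>\<delta>_s, \<delta>_t\<rangle> = f(s \<and> t)\<close>, \<open>(n\<cdot>f)(s) = n(f\<cdot>\<delta>_s)\<close>, \<open>(m\<box>n)(f) = m(n\<cdot>f)\<close>.\<close>
definition arens :: "((nat \<Rightarrow> complex) \<Rightarrow> complex) \<Rightarrow> ((nat \<Rightarrow> complex) \<Rightarrow> complex)
    \<Rightarrow> ((nat \<Rightarrow> complex) \<Rightarrow> complex)" where
  "arens m n = (\<lambda>f. if f \<in> linf then m (\<lambda>s. n (\<lambda>t. f (min t s))) else 0)"

type_synonym bd = "(nat \<Rightarrow> complex) \<Rightarrow> complex"

text \<open>Upper triangular matrices \<open>(a x; 0 b)\<close> encoded as triples \<open>(a, x, b)\<close>.\<close>
definition T_alg :: "(bd \<times> bd \<times> bd) cbalg" where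
  "T_alg = \<lparr> ba_carr = {(a, x, b). a \<in> l1bidual \<and> x \<in> l1bidual \<and> b \<in> l1bidual},
             ba_add = (\<lambda>(a, x, b) (a', x', b'). (\<lambda>f. a f + a' f, \<lambda>f. x f + x' f, \<lambda>f. b f + b' f)),
             ba_smul = (\<lambda>c (a, x, b). (\<lambda>f. c * a f, \<lambda>f. c * x f, \<lambda>f. c * b f)),
             ba_mul = (\<lambda>(a, x, b) (a', x', b').
                        (arens a a', \<lambda>f. arens a x' f + arens x b' f, arens b b')),
             ba_nrm = (\<lambda>(a, x, b). bdnorm a + bdnorm x + bdnorm b) \<rparr>"

end

theory Submission
  imports Defs
begin

text \<open>
  Write \<open>\<delta>\<close> for the point mass at the absorbing element \<open>0\<close> of \<open>\<nat>\<^sub>\<and>\<close>, an idempotent of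
  \<open>\<ell>\<^sup>1(\<nat>\<^sub>\<and>)\<^sup>*\<^sup>*\<close>, and \<open>E\<^sub>1\<^sub>1, E\<^sub>1\<^sub>2, E\<^sub>2\<^sub>2\<close> for the matrix units of \<open>T\<close> with entry \<open>\<delta>\<close>. Evaluation at
  the constant sequence \<open>1\<close> is a character of \<open>\<ell>\<^sup>1(\<nat>\<^sub>\<and>)\<^sup>*\<^sup>*\<close>, so
  \<open>\<phi>(x, y) = \<langle>x\<^sub>1\<^sub>2, 1\<rangle> \<langle>y\<^sub>2\<^sub>2, 1\<rangle>\<close> is a bounded bilinear form on \<open>T\<close>. For a bimodule morphism
  \<open>\<rho> : T \<rightarrow> T \<otimes>\<^sub>p T\<close> evaluate \<open>\<rho>(E\<^sub>1\<^sub>2)\<close> at \<open>\<phi>\<close> in two ways. From \<open>E\<^sub>1\<^sub>2 = E\<^sub>1\<^sub>1 E\<^sub>1\<^sub>2\<close> we get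
  \<open>\<rho>(E\<^sub>1\<^sub>2) = \<rho>(E\<^sub>1\<^sub>1) \<cdot> E\<^sub>1\<^sub>2\<close>, which pairs to \<open>0\<close> with \<open>\<phi>\<close> because \<open>(y E\<^sub>1\<^sub>2)\<^sub>2\<^sub>2 = 0\<close>. From
  \<open>E\<^sub>1\<^sub>2 = E\<^sub>1\<^sub>2 E\<^sub>2\<^sub>2\<close> we get \<open>\<rho>(E\<^sub>1\<^sub>2) = E\<^sub>1\<^sub>2 \<cdot> \<rho>(E\<^sub>2\<^sub>2)\<close>, and \<open>\<phi>(E\<^sub>1\<^sub>2 x, y) = \<langle>(x y)\<^sub>2\<^sub>2, 1\<rangle>\<close>, so
  this pairing is \<open>\<langle>\<pi>(\<rho>(E\<^sub>2\<^sub>2))\<^sub>2\<^sub>2, 1\<rangle>\<close>. Hence \<open>\<langle>\<pi>(\<rho>(E\<^sub>2\<^sub>2))\<^sub>2\<^sub>2, 1\<rangle> = 0\<close> while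
  \<open>\<langle>(E\<^sub>2\<^sub>2)\<^sub>2\<^sub>2, 1\<rangle> = 1\<close>, and \<open>\<parallel>\<pi>(\<rho>(E\<^sub>2\<^sub>2)) - E\<^sub>2\<^sub>2\<parallel> \<ge> 1\<close> for every bimodule morphism \<open>\<rho>\<close>.
\<close>

section \<open>Bounded sequences and the bidual norm\<close>

lemma linf_norm_le_supn: "f \<in> linf \<Longrightarrow> cmod (f n) \<le> supn f"
  unfolding linf_def supn_def
  by (rule cSUP_upper) (auto simp: bounded_iff bdd_above_def)

lemma linfI:
  assumes "\<And>n. cmod (f n) \<le> B"
  shows "f \<in> linf" "supn f \<le> B"
proof -
  show "f \<in> linf" unfolding linf_def bounded_iff using assms by auto
  show "supn f \<le> B" unfolding supn_def by (rule cSUP_least) (auto simp: assms)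
qed

lemma supn_nonneg: "f \<in> linf \<Longrightarrow> 0 \<le> supn f"
  using linf_norm_le_supn[of f 0] by (meson norm_ge_zero order_trans)

lemma linf_const: "(\<lambda>_. c) \<in> linf" and supn_const: "supn (\<lambda>_. c) = cmod c"
  using linfI[of "\<lambda>_. c" "cmod c"] linf_norm_le_supn[of "\<lambda>_. c" 0] by auto

lemma linf_add: "f \<in> linf \<Longrightarrow> g \<in> linf \<Longrightarrow> (\<lambda>n. f n + g n) \<in> linf"
  by (rule linfI(1)[where B = "supn f + supn g"])
     (meson add_mono linf_norm_le_supn norm_triangle_ineq order_trans)

lemma linf_scale: "f \<in> linf \<Longrightarrow> (\<lambda>n. c * f n) \<in> linf"
  by (rule linfI(1)[where B = "cmod c * supn f"])
     (simp add: norm_mult linf_norm_le_supn mult_left_mono)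

lemma linf_min:
  assumes "f \<in> linf"
  shows "(\<lambda>t. f (min t s)) \<in> linf" "supn (\<lambda>t. f (min t s)) \<le> supn f"
  using linfI[of "\<lambda>t. f (min t s)" "supn f"] linf_norm_le_supn[OF assms] by auto

lemma l1bidualI:
  assumes "\<And>f g. f \<in> linf \<Longrightarrow> g \<in> linf \<Longrightarrow> m (\<lambda>n. f n + g n) = m f + m g"
    and "\<And>c f. f \<in> linf \<Longrightarrow> m (\<lambda>n. c * f n) = c * m f"
    and "\<And>f. f \<in> linf \<Longrightarrow> cmod (m f) \<le> K * supn f"
    and "\<And>f. f \<notin> linf \<Longrightarrow> m f = 0"
  shows "m \<in> l1bidual"
  unfolding l1bidual_def using assms by blast

lemma l1bidual_add: "m \<in> l1bidual \<Longrightarrow> f \<in> linf \<Longrightarrow> g \<in> linf \<Longrightarrow> m (\<lambda>n. f n + g n) = m f + m g"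
  and l1bidual_scale: "m \<in> l1bidual \<Longrightarrow> f \<in> linf \<Longrightarrow> m (\<lambda>n. c * f n) = c * m f"
  and l1bidual_outside: "m \<in> l1bidual \<Longrightarrow> f \<notin> linf \<Longrightarrow> m f = 0"
  unfolding l1bidual_def by auto

lemma l1bidual_zero: "m \<in> l1bidual \<Longrightarrow> m (\<lambda>n. 0) = 0"
  using l1bidual_scale[of m "\<lambda>n. 0" 0] linf_const by auto

lemma l1bidual_const: "m \<in> l1bidual \<Longrightarrow> m (\<lambda>n. c) = c * m (\<lambda>n. 1)"
  using l1bidual_scale[of m "\<lambda>n. 1" c] linf_const by simp

lemma bdd_above_l1bidual:
  assumes "m \<in> l1bidual"
  shows "bdd_above ((\<lambda>f. cmod (m f)) ` {f\<in>linf. supn f \<le> 1})"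
proof -
  obtain K where K: "\<forall>f\<in>linf. cmod (m f) \<le> K * supn f"
    using assms unfolding l1bidual_def by auto
  have "cmod (m f) \<le> \<bar>K\<bar>" if "f \<in> linf" "supn f \<le> 1" for f
  proof -
    have "K * supn f \<le> \<bar>K\<bar> * supn f"
      using supn_nonneg[OF that(1)] by (simp add: mult_right_mono)
    also have "\<dots> \<le> \<bar>K\<bar>" using that(2) by (simp add: mult_left_le)
    finally show ?thesis using K that by force
  qed
  then show ?thesis unfolding bdd_above_def by blast
qed

lemma bdnorm_upper: "m \<in> l1bidual \<Longrightarrow> f \<in> linf \<Longrightarrow> supn f \<le> 1 \<Longrightarrow> cmod (m f) \<le> bdnorm m"
  unfolding bdnorm_def by (rule cSUP_upper) (auto intro: bdd_above_l1bidual)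

lemma bdnorm_least:
  assumes "\<And>f. f \<in> linf \<Longrightarrow> supn f \<le> 1 \<Longrightarrow> cmod (m f) \<le> B"
  shows "bdnorm m \<le> B"
  unfolding bdnorm_def
proof (rule cSUP_least)
  show "{f \<in> linf. supn f \<le> 1} \<noteq> {}" using linf_const[of 0] supn_const[of 0] by force
qed (use assms in auto)

lemma bdnorm_nonneg: "m \<in> l1bidual \<Longrightarrow> 0 \<le> bdnorm m"
  using bdnorm_upper[of m "\<lambda>_. 1", OF _ linf_const] supn_const[of 1] by (simp add: order_trans[OF norm_ge_zero])

lemma norm_le_bdnorm_supn:
  assumes m: "m \<in> l1bidual" and f: "f \<in> linf"
  shows "cmod (m f) \<le> bdnorm m * supn f"
proof (cases "supn f = 0")
  case True
  then have "f = (\<lambda>n. 0 * f n)" using linf_norm_le_supn[OF f] by (auto intro!: ext)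
  then show ?thesis using True l1bidual_scale[OF m f, of 0] by simp
next
  case False
  then have s: "supn f > 0" using supn_nonneg[OF f] by simp
  define g where "g = (\<lambda>n. (1 / supn f) * f n)"
  have "supn g \<le> 1" unfolding g_def
    by (rule linfI(2)) (use s linf_norm_le_supn[OF f] in \<open>auto simp: norm_mult norm_divide\<close>)
  moreover have "g \<in> linf" unfolding g_def by (rule linf_scale[OF f])
  ultimately have "cmod (m g) \<le> bdnorm m" using bdnorm_upper[OF m] by blast
  moreover have "m g = (1 / supn f) * m f" unfolding g_def by (rule l1bidual_scale[OF m f])
  ultimately have "cmod (m f) / supn f \<le> bdnorm m" using s by (simp add: norm_mult norm_divide)
  then show ?thesis using s by (simp add: field_simps)
qed

lemma bdnorm_le_of_bound:
  assumes "m \<in> l1bidual" "0 \<le> B" "\<And>f. f \<in> linf \<Longrightarrow> cmod (m f) \<le> B * supn f"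
  shows "bdnorm m \<le> B"
  by (rule bdnorm_least) (use assms in \<open>meson mult_left_le order_trans\<close>)

lemma l1bidual_plus:
  assumes "m \<in> l1bidual" "n \<in> l1bidual"
  shows "(\<lambda>f. m f + n f) \<in> l1bidual" "bdnorm (\<lambda>f. m f + n f) \<le> bdnorm m + bdnorm n"
proof -
  have bound: "cmod (m f + n f) \<le> (bdnorm m + bdnorm n) * supn f" if "f \<in> linf" for f
    using norm_le_bdnorm_supn[OF assms(1) that] norm_le_bdnorm_supn[OF assms(2) that]
      norm_triangle_ineq[of "m f" "n f"] by (simp add: distrib_right)
  show plus: "(\<lambda>f. m f + n f) \<in> l1bidual"
    by (rule l1bidualI[OF _ _ bound])
       (use assms in \<open>auto simp: l1bidual_add l1bidual_scale l1bidual_outside algebra_simps\<close>)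
  show "bdnorm (\<lambda>f. m f + n f) \<le> bdnorm m + bdnorm n"
    using bdnorm_le_of_bound[OF plus _ bound] bdnorm_nonneg assms by (simp add: add_nonneg_nonneg)
qed

lemma l1bidual_scaleC:
  assumes "m \<in> l1bidual"
  shows "(\<lambda>f. c * m f) \<in> l1bidual"
proof (rule l1bidualI[where K = "cmod c * bdnorm m"])
  show "cmod (c * m f) \<le> cmod c * bdnorm m * supn f" if "f \<in> linf" for f
    using norm_le_bdnorm_supn[OF assms that] by (simp add: norm_mult mult.assoc mult_left_mono)
qed (use assms in \<open>auto simp: l1bidual_add l1bidual_scale l1bidual_outside algebra_simps\<close>)

lemma l1bidual_zero_fun: "(\<lambda>f. 0) \<in> l1bidual"
  by (rule l1bidualI[where K = 0]) auto

section \<open>The first Arens product\<close>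

lemma arens_inner:
  assumes n: "n \<in> l1bidual" and f: "f \<in> linf"
  shows "(\<lambda>s. n (\<lambda>t. f (min t s))) \<in> linf" "supn (\<lambda>s. n (\<lambda>t. f (min t s))) \<le> bdnorm n * supn f"
proof -
  have "cmod (n (\<lambda>t. f (min t s))) \<le> bdnorm n * supn f" for s
    using norm_le_bdnorm_supn[OF n linf_min(1)[OF f]] linf_min(2)[OF f] bdnorm_nonneg[OF n]
    by (meson mult_left_mono order_trans)
  then show "(\<lambda>s. n (\<lambda>t. f (min t s))) \<in> linf" "supn (\<lambda>s. n (\<lambda>t. f (min t s))) \<le> bdnorm n * supn f"
    using linfI[of "\<lambda>s. n (\<lambda>t. f (min t s))"] by auto
qed

lemma norm_arens_le:
  assumes m: "m \<in> l1bidual" and n: "n \<in> l1bidual" and f: "f \<in> linf"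
  shows "cmod (arens m n f) \<le> bdnorm m * bdnorm n * supn f"
proof -
  have "cmod (arens m n f) = cmod (m (\<lambda>s. n (\<lambda>t. f (min t s))))" using f by (simp add: arens_def)
  also have "\<dots> \<le> bdnorm m * supn (\<lambda>s. n (\<lambda>t. f (min t s)))"
    by (rule norm_le_bdnorm_supn[OF m arens_inner(1)[OF n f]])
  also have "\<dots> \<le> bdnorm m * (bdnorm n * supn f)"
    by (rule mult_left_mono[OF arens_inner(2)[OF n f] bdnorm_nonneg[OF m]])
  finally show ?thesis by (simp add: mult.assoc)
qed

lemma arens_plus_right:
  assumes "m \<in> l1bidual" "n \<in> l1bidual" "n' \<in> l1bidual"
  shows "arens m (\<lambda>f. n f + n' f) = (\<lambda>f. arens m n f + arens m n' f)"
proof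
  fix f show "arens m (\<lambda>f. n f + n' f) f = arens m n f + arens m n' f"
    using l1bidual_add[OF assms(1) arens_inner(1)[OF assms(2)] arens_inner(1)[OF assms(3)], of f]
    by (cases "f \<in> linf") (simp_all add: arens_def)
qed

lemma arens_scale_right:
  assumes "m \<in> l1bidual" "n \<in> l1bidual"
  shows "arens m (\<lambda>f. c * n f) = (\<lambda>f. c * arens m n f)"
proof
  fix f show "arens m (\<lambda>f. c * n f) f = c * arens m n f"
    using l1bidual_scale[OF assms(1) arens_inner(1)[OF assms(2)], of f]
    by (cases "f \<in> linf") (simp_all add: arens_def)
qed

lemma arens_zero_right: "m \<in> l1bidual \<Longrightarrow> arens m (\<lambda>f. 0) = (\<lambda>f. 0)"
  using l1bidual_zero by (auto simp: arens_def)

lemma arens_plus_left: "arens (\<lambda>f. m f + m' f) n = (\<lambda>f. arens m n f + arens m' n f)"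
  and arens_scale_left: "arens (\<lambda>f. c * m f) n = (\<lambda>f. c * arens m n f)"
  and arens_zero_left: "arens (\<lambda>f. 0) n = (\<lambda>f. 0)"
  by (auto simp: arens_def)

lemma arens_l1bidual:
  assumes m: "m \<in> l1bidual" and n: "n \<in> l1bidual"
  shows "arens m n \<in> l1bidual"
proof (rule l1bidualI[where K = "bdnorm m * bdnorm n"])
  fix f g assume f: "f \<in> linf" and g: "g \<in> linf"
  have "(\<lambda>s. n (\<lambda>t. f (min t s) + g (min t s))) = (\<lambda>s. n (\<lambda>t. f (min t s)) + n (\<lambda>t. g (min t s)))"
    using l1bidual_add[OF n linf_min(1)[OF f] linf_min(1)[OF g]] by auto
  then show "arens m n (\<lambda>x. f x + g x) = arens m n f + arens m n g"
    using f g linf_add[OF f g]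
    by (simp add: arens_def l1bidual_add[OF m arens_inner(1)[OF n f] arens_inner(1)[OF n g]])
next
  fix c f assume f: "f \<in> linf"
  have "(\<lambda>s. n (\<lambda>t. c * f (min t s))) = (\<lambda>s. c * n (\<lambda>t. f (min t s)))"
    using l1bidual_scale[OF n linf_min(1)[OF f]] by auto
  then show "arens m n (\<lambda>x. c * f x) = c * arens m n f"
    using f linf_scale[OF f] by (simp add: arens_def l1bidual_scale[OF m arens_inner(1)[OF n f]])
qed (use norm_arens_le[OF m n] in \<open>auto simp: arens_def\<close>)

lemma bdnorm_arens_le:
  assumes "m \<in> l1bidual" "n \<in> l1bidual"
  shows "bdnorm (arens m n) \<le> bdnorm m * bdnorm n"
  using bdnorm_le_of_bound[OF arens_l1bidual[OF assms]] norm_arens_le[OF assms] bdnorm_nonneg assms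
  by simp

lemma arens_const_one:
  "m \<in> l1bidual \<Longrightarrow> n \<in> l1bidual \<Longrightarrow> arens m n (\<lambda>_. 1) = m (\<lambda>_. 1) * n (\<lambda>_. 1)"
  using linf_const l1bidual_const[of m "n (\<lambda>_. 1)"] by (simp add: arens_def mult.commute)

definition delta0 :: bd where
  "delta0 = (\<lambda>f. if f \<in> linf then f 0 else 0)"

lemma delta0_l1bidual: "delta0 \<in> l1bidual"
proof (rule l1bidualI[where K = 1])
  show "cmod (delta0 f) \<le> 1 * supn f" if "f \<in> linf" for f
    using linf_norm_le_supn[OF that, of 0] that by (simp add: delta0_def)
qed (auto simp: delta0_def linf_add linf_scale)

lemma delta0_const_one: "delta0 (\<lambda>_. 1) = 1"
  using linf_const by (simp add: delta0_def)

lemma arens_delta0_left: "n \<in> l1bidual \<Longrightarrow> f \<in> linf \<Longrightarrow> arens delta0 n f = n (\<lambda>_. f 0)"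
  using arens_inner(1)[of n f] by (simp add: arens_def delta0_def)

lemma arens_delta0_delta0: "arens delta0 delta0 = delta0"
proof
  fix f show "arens delta0 delta0 f = delta0 f"
    using arens_delta0_left[OF delta0_l1bidual, of f] linf_const
    by (cases "f \<in> linf") (simp_all add: arens_def delta0_def)
qed

definition bdsum :: "(nat \<Rightarrow> bd) \<Rightarrow> bd" where
  "bdsum m = (\<lambda>f. \<Sum>k. m k f)"

lemma summable_norm_eval:
  assumes m: "\<And>k. m k \<in> l1bidual" and s: "summable (\<lambda>k. bdnorm (m k))" and f: "f \<in> linf"
  shows "summable (\<lambda>k. norm (m k f))"
  by (rule summable_comparison_test[where g = "\<lambda>k. bdnorm (m k) * supn f"])
     (use norm_le_bdnorm_supn[OF m f] summable_mult2[OF s] in auto)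

lemma summable_eval:
  assumes m: "\<And>k. m k \<in> l1bidual" and s: "summable (\<lambda>k. bdnorm (m k))"
  shows "summable (\<lambda>k. m k f)"
  using summable_norm_cancel[OF summable_norm_eval[OF m s]] l1bidual_outside[OF m, of f]
  by (cases "f \<in> linf") auto

lemma bdsum_l1bidual:
  assumes m: "\<And>k. m k \<in> l1bidual" and s: "summable (\<lambda>k. bdnorm (m k))"
  shows "bdsum m \<in> l1bidual" "bdnorm (bdsum m) \<le> (\<Sum>k. bdnorm (m k))"
proof -
  note sm = summable_norm_eval[OF m s]
  have bound: "cmod (bdsum m f) \<le> (\<Sum>k. bdnorm (m k)) * supn f" if f: "f \<in> linf" for f
  proof -
    have "cmod (bdsum m f) \<le> (\<Sum>k. norm (m k f))" unfolding bdsum_def by (rule summable_norm[OF sm[OF f]])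
    also have "\<dots> \<le> (\<Sum>k. bdnorm (m k) * supn f)"
      by (rule suminf_le) (use norm_le_bdnorm_supn[OF m f] sm[OF f] summable_mult2[OF s] in auto)
    also have "\<dots> = (\<Sum>k. bdnorm (m k)) * supn f" by (rule suminf_mult2[OF s, symmetric])
    finally show ?thesis .
  qed
  show sum: "bdsum m \<in> l1bidual"
  proof (rule l1bidualI[OF _ _ bound])
    fix f g assume "f \<in> linf" "g \<in> linf"
    then show "bdsum m (\<lambda>n. f n + g n) = bdsum m f + bdsum m g"
      unfolding bdsum_def using l1bidual_add[OF m] suminf_add[OF summable_eval[OF m s] summable_eval[OF m s]]
      by simp
  next
    fix c f assume "f \<in> linf"
    then show "bdsum m (\<lambda>n. c * f n) = c * bdsum m f"
      unfolding bdsum_def using l1bidual_scale[OF m] suminf_mult[OF summable_eval[OF m s]] by simp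
  qed (auto simp: bdsum_def l1bidual_outside[OF m])
  show "bdnorm (bdsum m) \<le> (\<Sum>k. bdnorm (m k))"
    using bdnorm_le_of_bound[OF sum _ bound] suminf_nonneg[OF s] bdnorm_nonneg[OF m] by simp
qed

section \<open>The triangular algebra\<close>

abbreviation TC :: "(bd \<times> bd \<times> bd) set" where
  "TC \<equiv> ba_carr T_alg"

lemma T_carr_iff [simp]:
  "u \<in> TC \<longleftrightarrow> fst u \<in> l1bidual \<and> fst (snd u) \<in> l1bidual \<and> snd (snd u) \<in> l1bidual"
  by (cases u) (auto simp: T_alg_def)

lemma T_add [simp]: "ba_add T_alg u v =
    (\<lambda>f. fst u f + fst v f, \<lambda>f. fst (snd u) f + fst (snd v) f, \<lambda>f. snd (snd u) f + snd (snd v) f)"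
  and T_smul [simp]: "ba_smul T_alg c u = (\<lambda>f. c * fst u f, \<lambda>f. c * fst (snd u) f, \<lambda>f. c * snd (snd u) f)"
  and T_mul [simp]: "ba_mul T_alg u v = (arens (fst u) (fst v),
    \<lambda>f. arens (fst u) (fst (snd v)) f + arens (fst (snd u)) (snd (snd v)) f, arens (snd (snd u)) (snd (snd v)))"
  and T_nrm [simp]: "ba_nrm T_alg u = bdnorm (fst u) + bdnorm (fst (snd u)) + bdnorm (snd (snd u))"
  by (cases u, cases v, simp add: T_alg_def)+

lemma T_add_closed: "u \<in> TC \<Longrightarrow> v \<in> TC \<Longrightarrow> ba_add T_alg u v \<in> TC"
  and T_smul_closed: "u \<in> TC \<Longrightarrow> ba_smul T_alg c u \<in> TC"
  and T_mul_closed: "u \<in> TC \<Longrightarrow> v \<in> TC \<Longrightarrow> ba_mul T_alg u v \<in> TC"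
  and T_nrm_nonneg: "u \<in> TC \<Longrightarrow> 0 \<le> ba_nrm T_alg u"
  by (simp_all add: l1bidual_plus l1bidual_scaleC arens_l1bidual bdnorm_nonneg)

lemma T_nrm_mul_le:
  assumes "u \<in> TC" "v \<in> TC"
  shows "ba_nrm T_alg (ba_mul T_alg u v) \<le> ba_nrm T_alg u * ba_nrm T_alg v"
proof -
  obtain a x b a' x' b' where uv: "u = (a, x, b)" "v = (a', x', b')" by (cases u, cases v)
  then have l: "a \<in> l1bidual" "x \<in> l1bidual" "b \<in> l1bidual" "a' \<in> l1bidual" "x' \<in> l1bidual" "b' \<in> l1bidual"
    using assms by auto
  have "bdnorm (\<lambda>f. arens a x' f + arens x b' f) \<le> bdnorm a * bdnorm x' + bdnorm x * bdnorm b'"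
    using l1bidual_plus(2)[OF arens_l1bidual[OF l(1,5)] arens_l1bidual[OF l(2,6)]]
      bdnorm_arens_le[OF l(1,5)] bdnorm_arens_le[OF l(2,6)] by linarith
  moreover have "0 \<le> bdnorm a * bdnorm b'" "0 \<le> bdnorm x * bdnorm a'" "0 \<le> bdnorm x * bdnorm x'"
    "0 \<le> bdnorm b * bdnorm a'" "0 \<le> bdnorm b * bdnorm x'"
    using l bdnorm_nonneg by simp_all
  ultimately show ?thesis
    using bdnorm_arens_le[OF l(1,4)] bdnorm_arens_le[OF l(3,6)] uv by (simp add: algebra_simps)
qed

lemma T_mul_add_left: "ba_mul T_alg (ba_add T_alg u w) v = ba_add T_alg (ba_mul T_alg u v) (ba_mul T_alg w v)"
  and T_mul_scale_left: "ba_mul T_alg (ba_smul T_alg c u) v = ba_smul T_alg c (ba_mul T_alg u v)"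
  by (simp_all add: arens_plus_left arens_scale_left algebra_simps)

lemma T_mul_add_right:
  "u \<in> TC \<Longrightarrow> v \<in> TC \<Longrightarrow> w \<in> TC \<Longrightarrow>
     ba_mul T_alg u (ba_add T_alg v w) = ba_add T_alg (ba_mul T_alg u v) (ba_mul T_alg u w)"
  and T_mul_scale_right:
  "u \<in> TC \<Longrightarrow> v \<in> TC \<Longrightarrow> ba_mul T_alg u (ba_smul T_alg c v) = ba_smul T_alg c (ba_mul T_alg u v)"
  by (simp_all add: arens_plus_right arens_scale_right algebra_simps)

lemma lin_funcs_add: "\<psi> \<in> lin_funcs B \<Longrightarrow> x \<in> ba_carr B \<Longrightarrow> y \<in> ba_carr B \<Longrightarrow> \<psi> (ba_add B x y) = \<psi> x + \<psi> y"
  and lin_funcs_scale: "\<psi> \<in> lin_funcs B \<Longrightarrow> x \<in> ba_carr B \<Longrightarrow> \<psi> (ba_smul B c x) = c * \<psi> x"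
  unfolding lin_funcs_def by blast+

lemma lin_funcs_boundE:
  assumes "\<psi> \<in> lin_funcs B" and "\<And>x. x \<in> ba_carr B \<Longrightarrow> 0 \<le> ba_nrm B x"
  obtains K where "0 \<le> K" "\<And>x. x \<in> ba_carr B \<Longrightarrow> cmod (\<psi> x) \<le> K * ba_nrm B x"
proof -
  obtain K where K: "\<forall>x\<in>ba_carr B. cmod (\<psi> x) \<le> K * ba_nrm B x"
    using assms(1) unfolding lin_funcs_def by blast
  have "cmod (\<psi> x) \<le> max K 0 * ba_nrm B x" if "x \<in> ba_carr B" for x
    using K that assms(2)[OF that] by (meson max.cobounded1 mult_right_mono order_trans)
  then show ?thesis using that[of "max K 0"] by auto
qed

lemma bil_forms_comp_T_mul:
  assumes \<psi>: "\<psi> \<in> lin_funcs T_alg"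
  shows "(\<lambda>x y. \<psi> (ba_mul T_alg x y)) \<in> bil_forms T_alg"
proof -
  obtain K where K: "0 \<le> K" "\<And>x. x \<in> TC \<Longrightarrow> cmod (\<psi> x) \<le> K * ba_nrm T_alg x"
    using lin_funcs_boundE[OF \<psi> T_nrm_nonneg] by blast
  have "cmod (\<psi> (ba_mul T_alg x y)) \<le> K * ba_nrm T_alg x * ba_nrm T_alg y" if "x \<in> TC" "y \<in> TC" for x y
    using K(2)[OF T_mul_closed[OF that]] mult_left_mono[OF T_nrm_mul_le[OF that] K(1)]
    by (simp add: mult.assoc)
  moreover have "\<psi> (ba_mul T_alg (ba_add T_alg x z) y) = \<psi> (ba_mul T_alg x y) + \<psi> (ba_mul T_alg z y) \<and>
      \<psi> (ba_mul T_alg x (ba_add T_alg y z)) = \<psi> (ba_mul T_alg x y) + \<psi> (ba_mul T_alg x z) \<and>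
      \<psi> (ba_mul T_alg (ba_smul T_alg c x) y) = c * \<psi> (ba_mul T_alg x y) \<and>
      \<psi> (ba_mul T_alg x (ba_smul T_alg c y)) = c * \<psi> (ba_mul T_alg x y)"
    if "x \<in> TC" "y \<in> TC" "z \<in> TC" for x y z c
    unfolding T_mul_add_left T_mul_add_right[OF that(1,2,3)] T_mul_scale_left T_mul_scale_right[OF that(1,2)]
    using lin_funcs_add[OF \<psi>] lin_funcs_scale[OF \<psi>] T_mul_closed that by blast
  ultimately show ?thesis unfolding bil_forms_def by blast
qed

lemma lin_funcs_T_entry:
  assumes f: "f \<in> linf"
    and sel: "\<And>u. u \<in> TC \<Longrightarrow> sel u \<in> l1bidual \<and> bdnorm (sel u) \<le> ba_nrm T_alg u"
    and lin: "\<And>x y c. x \<in> TC \<Longrightarrow> y \<in> TC \<Longrightarrow>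
      sel (ba_add T_alg x y) f = sel x f + sel y f \<and> sel (ba_smul T_alg c x) f = c * sel x f"
  shows "(\<lambda>u. sel u f) \<in> lin_funcs T_alg"
proof -
  have "cmod (sel u f) \<le> supn f * ba_nrm T_alg u" if "u \<in> TC" for u
  proof -
    have "cmod (sel u f) \<le> bdnorm (sel u) * supn f" using norm_le_bdnorm_supn[OF _ f] sel[OF that] by blast
    also have "\<dots> \<le> ba_nrm T_alg u * supn f"
      using sel[OF that] supn_nonneg[OF f] by (simp add: mult_right_mono)
    finally show ?thesis by (simp add: mult.commute)
  qed
  then show ?thesis unfolding lin_funcs_def using lin by blast
qed

lemma lin_funcs_T_entries:
  assumes "f \<in> linf"
  shows "(\<lambda>u. fst u f) \<in> lin_funcs T_alg"
    "(\<lambda>u. fst (snd u) f) \<in> lin_funcs T_alg"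
    "(\<lambda>u. snd (snd u) f) \<in> lin_funcs T_alg"
  by (rule lin_funcs_T_entry[OF assms]; auto simp del: T_carr_iff; auto simp: bdnorm_nonneg)+

section \<open>The product map on the projective tensor product\<close>

definition Tsum :: "(nat \<Rightarrow> bd \<times> bd \<times> bd) \<Rightarrow> bd \<times> bd \<times> bd" where
  "Tsum w = (bdsum (\<lambda>k. fst (w k)), bdsum (\<lambda>k. fst (snd (w k))), bdsum (\<lambda>k. snd (snd (w k))))"

lemma summable_T_entries:
  assumes w: "\<And>k. w k \<in> TC" and s: "summable (\<lambda>k. ba_nrm T_alg (w k))"
  shows "summable (\<lambda>k. bdnorm (fst (w k)))" "summable (\<lambda>k. bdnorm (fst (snd (w k))))"
    "summable (\<lambda>k. bdnorm (snd (snd (w k))))"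
  by (rule summable_comparison_test[OF _ s]; use w bdnorm_nonneg in simp)+

lemma Tsum_closed:
  assumes w: "\<And>k. w k \<in> TC" and s: "summable (\<lambda>k. ba_nrm T_alg (w k))"
  shows "Tsum w \<in> TC" "ba_nrm T_alg (Tsum w) \<le> (\<Sum>k. ba_nrm T_alg (w k))"
proof -
  note sums = summable_T_entries[OF w s]
  have l: "fst (w k) \<in> l1bidual" "fst (snd (w k)) \<in> l1bidual" "snd (snd (w k)) \<in> l1bidual" for k
    using w[of k] by auto
  note B = bdsum_l1bidual[OF l(1) sums(1)] bdsum_l1bidual[OF l(2) sums(2)] bdsum_l1bidual[OF l(3) sums(3)]
  show "Tsum w \<in> TC" unfolding Tsum_def using B by simp
  have "ba_nrm T_alg (Tsum w) \<le> (\<Sum>k. bdnorm (fst (w k))) + (\<Sum>k. bdnorm (fst (snd (w k))))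
      + (\<Sum>k. bdnorm (snd (snd (w k))))"
    unfolding Tsum_def using B by simp
  also have "\<dots> = (\<Sum>k. ba_nrm T_alg (w k))"
    using suminf_add[OF sums(1,2)] suminf_add[OF summable_add[OF sums(1,2)] sums(3)] by simp
  finally show "ba_nrm T_alg (Tsum w) \<le> (\<Sum>k. ba_nrm T_alg (w k))" .
qed

lemma Tsum_split_head:
  assumes w: "\<And>k. w k \<in> TC" and s: "summable (\<lambda>k. ba_nrm T_alg (w k))"
  shows "Tsum w = ba_add T_alg (w 0) (Tsum (\<lambda>k. w (Suc k)))"
proof -
  have l: "fst (w k) \<in> l1bidual" "fst (snd (w k)) \<in> l1bidual" "snd (snd (w k)) \<in> l1bidual" for k
    using w[of k] by auto
  note sums = summable_T_entries[OF w s]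
  show ?thesis unfolding Tsum_def bdsum_def
    using suminf_split_head[OF summable_eval[OF l(1) sums(1)]] suminf_split_head[OF summable_eval[OF l(2) sums(2)]]
      suminf_split_head[OF summable_eval[OF l(3) sums(3)]]
    by (simp add: algebra_simps)
qed

lemma suminf_tail_tendsto_zero:
  fixes f :: "nat \<Rightarrow> 'a::real_normed_vector"
  assumes "summable f"
  shows "(\<lambda>N. \<Sum>k. f (k + N)) \<longlonglongrightarrow> 0"
proof -
  have "(\<lambda>N. suminf f - (\<Sum>i<N. f i)) \<longlonglongrightarrow> suminf f - suminf f"
    by (intro tendsto_diff tendsto_const summable_LIMSEQ[OF assms])
  then show ?thesis using suminf_minus_initial_segment[OF assms] by simp
qed

text \<open>Bounded functionals commute with \<open>Tsum\<close>: they are additive on partial sums, and the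
  remaining tail \<open>Tsum (\<lambda>k. w (k + N))\<close> has norm at most the tail of \<open>\<Sum> \<parallel>w k\<parallel>\<close>.\<close>

lemma lin_funcs_Tsum:
  assumes w: "\<And>k. w k \<in> TC" and s: "summable (\<lambda>k. ba_nrm T_alg (w k))"
    and \<psi>: "\<psi> \<in> lin_funcs T_alg"
  shows "(\<lambda>k. \<psi> (w k)) sums \<psi> (Tsum w)"
proof -
  define tail where "tail N = Tsum (\<lambda>k. w (k + N))" for N
  have wN: "w (k + N) \<in> TC" for k N using w by blast
  have sN: "summable (\<lambda>k. ba_nrm T_alg (w (k + N)))" for N
    using summable_ignore_initial_segment[OF s, of N] by (simp del: T_nrm)
  have partial: "\<psi> (Tsum w) = (\<Sum>k<N. \<psi> (w k)) + \<psi> (tail N)" for N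
  proof (induction N)
    case 0 then show ?case by (simp add: tail_def)
  next
    case (Suc N)
    have "tail N = ba_add T_alg (w N) (tail (Suc N))"
      unfolding tail_def using Tsum_split_head[OF wN sN, of N] by simp
    then have "\<psi> (tail N) = \<psi> (w N) + \<psi> (tail (Suc N))"
      using lin_funcs_add[OF \<psi> w Tsum_closed(1)[OF wN sN, of "Suc N"]] by (simp add: tail_def del: T_add T_carr_iff)
    then show ?case using Suc by simp
  qed
  obtain K where K: "0 \<le> K" "\<And>x. x \<in> TC \<Longrightarrow> cmod (\<psi> x) \<le> K * ba_nrm T_alg x"
    using lin_funcs_boundE[OF \<psi> T_nrm_nonneg] by blast
  have tail_bound: "norm (\<psi> (tail N)) \<le> K * (\<Sum>k. ba_nrm T_alg (w (k + N)))" for N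
    using K(2)[OF Tsum_closed(1)[OF wN sN, of N]] mult_left_mono[OF Tsum_closed(2)[OF wN sN, of N] K(1)]
    unfolding tail_def by (simp del: T_nrm T_carr_iff)
  have "(\<lambda>N. K * (\<Sum>k. ba_nrm T_alg (w (k + N)))) \<longlonglongrightarrow> 0"
    using tendsto_mult_right_zero[OF suminf_tail_tendsto_zero[OF s]] by simp
  then have "(\<lambda>N. \<psi> (tail N)) \<longlonglongrightarrow> 0"
    by (rule Lim_null_comparison[rotated]) (use tail_bound in auto)
  then have "(\<lambda>N. \<psi> (Tsum w) - \<psi> (tail N)) \<longlonglongrightarrow> \<psi> (Tsum w) - 0"
    by (intro tendsto_diff tendsto_const)
  moreover have "(\<lambda>N. \<psi> (Tsum w) - \<psi> (tail N)) = (\<lambda>N. \<Sum>k<N. \<psi> (w k))"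
    by (metis partial add_diff_cancel_right')
  ultimately show ?thesis unfolding sums_def by simp
qed

text \<open>Existence of the weakly defined product \<open>\<pi>(\<Sum> x\<^sub>k \<otimes> y\<^sub>k)\<close>: it is \<open>\<Sum> x\<^sub>k y\<^sub>k\<close>, and it is
  unique because the entrywise evaluations are among the bounded functionals.\<close>

lemma tproj_ptens:
  assumes u: "u \<in> ptens T_alg"
  shows "tproj T_alg u \<in> TC"
    "\<And>\<psi>. \<psi> \<in> lin_funcs T_alg \<Longrightarrow> \<psi> (tproj T_alg u) = u (\<lambda>x y. \<psi> (ba_mul T_alg x y))"
proof -
  obtain xs ys where rep: "tens_rep T_alg xs ys" and u_eq: "u = tens_of T_alg xs ys"
    using u unfolding ptens_def by blast
  have xy: "xs k \<in> TC" "ys k \<in> TC" for k using rep unfolding tens_rep_def by blast+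
  define w where "w k = ba_mul T_alg (xs k) (ys k)" for k
  have w: "w k \<in> TC" for k unfolding w_def using T_mul_closed xy by blast
  have s: "summable (\<lambda>k. ba_nrm T_alg (w k))"
    by (rule summable_comparison_test[OF _ rep[unfolded tens_rep_def, THEN conjunct2]])
       (use T_nrm_mul_le[OF xy] T_nrm_nonneg[OF w] in \<open>auto simp: w_def simp del: T_nrm T_mul T_carr_iff\<close>)
  have P: "\<psi> (Tsum w) = u (\<lambda>x y. \<psi> (ba_mul T_alg x y))" if \<psi>: "\<psi> \<in> lin_funcs T_alg" for \<psi>
    using sums_unique[OF lin_funcs_Tsum[OF w s \<psi>]] bil_forms_comp_T_mul[OF \<psi>]
    unfolding u_eq tens_of_def w_def by simp
  have unique: "c = Tsum w" if c: "c \<in> TC" "\<forall>\<psi>\<in>lin_funcs T_alg. \<psi> c = u (\<lambda>x y. \<psi> (ba_mul T_alg x y))" for c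
  proof -
    have "fst c f = fst (Tsum w) f \<and> fst (snd c) f = fst (snd (Tsum w)) f \<and> snd (snd c) f = snd (snd (Tsum w)) f"
      for f
    proof (cases "f \<in> linf")
      case True
      then show ?thesis using c(2) P lin_funcs_T_entries[OF True] by metis
    next
      case False
      then show ?thesis using c(1) Tsum_closed(1)[OF w s] by (simp add: l1bidual_outside)
    qed
    then show ?thesis by (simp add: prod_eq_iff fun_eq_iff)
  qed
  have "tproj T_alg u = Tsum w" unfolding tproj_def
    by (rule the_equality) (use Tsum_closed(1)[OF w s] P unique in blast)+
  then show "tproj T_alg u \<in> TC" "\<And>\<psi>. \<psi> \<in> lin_funcs T_alg \<Longrightarrow> \<psi> (tproj T_alg u) = u (\<lambda>x y. \<psi> (ba_mul T_alg x y))"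
    using Tsum_closed(1)[OF w s] P by simp_all
qed

section \<open>Bimodule morphisms cannot approximate the identity at \<open>E\<^sub>2\<^sub>2\<close>\<close>

definition E11 :: "bd \<times> bd \<times> bd" where "E11 = (delta0, \<lambda>f. 0, \<lambda>f. 0)"
definition E12 :: "bd \<times> bd \<times> bd" where "E12 = (\<lambda>f. 0, delta0, \<lambda>f. 0)"
definition E22 :: "bd \<times> bd \<times> bd" where "E22 = (\<lambda>f. 0, \<lambda>f. 0, delta0)"

lemma matrix_units_closed: "E11 \<in> TC" "E12 \<in> TC" "E22 \<in> TC"
  by (simp_all add: E11_def E12_def E22_def delta0_l1bidual l1bidual_zero_fun)

lemma E11_mul_E12: "ba_mul T_alg E11 E12 = E12"
  and E12_mul_E22: "ba_mul T_alg E12 E22 = E12"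
  by (simp_all add: E11_def E12_def E22_def arens_delta0_delta0 arens_zero_left
      arens_zero_right[OF delta0_l1bidual])

lemma bil_forms_T_cong:
  assumes "\<And>x y. x \<in> TC \<Longrightarrow> y \<in> TC \<Longrightarrow> F x y = G x y"
  shows "F \<in> bil_forms T_alg \<longleftrightarrow> G \<in> bil_forms T_alg"
proof -
  have "F (ba_add T_alg x z) y = G (ba_add T_alg x z) y \<and> F x (ba_add T_alg y z) = G x (ba_add T_alg y z) \<and>
      F (ba_smul T_alg c x) y = G (ba_smul T_alg c x) y \<and> F x (ba_smul T_alg c y) = G x (ba_smul T_alg c y) \<and>
      F x y = G x y \<and> F z y = G z y \<and> F x z = G x z"
    if "x \<in> TC" "y \<in> TC" "z \<in> TC" for x y z c
    using assms T_add_closed T_smul_closed that by blast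
  then show ?thesis unfolding bil_forms_def by (simp del: T_carr_iff T_add T_smul T_nrm)
qed

lemma tens_of_T_cong:
  assumes "tens_rep T_alg xs ys" "\<And>x y. x \<in> TC \<Longrightarrow> y \<in> TC \<Longrightarrow> F x y = G x y"
  shows "tens_of T_alg xs ys F = tens_of T_alg xs ys G"
  using assms bil_forms_T_cong[of F G] unfolding tens_of_def tens_rep_def by (simp del: T_carr_iff)

definition corner_form :: "bd \<times> bd \<times> bd \<Rightarrow> bd \<times> bd \<times> bd \<Rightarrow> complex" where
  "corner_form x y = fst (snd x) (\<lambda>_. 1) * snd (snd y) (\<lambda>_. 1)"

lemma corner_form_bil_forms: "corner_form \<in> bil_forms T_alg"
proof -
  have eval: "cmod (m (\<lambda>_. 1)) \<le> bdnorm m" if "m \<in> l1bidual" for m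
    using norm_le_bdnorm_supn[OF that linf_const, of 1] supn_const[of 1] by simp
  have bound: "cmod (corner_form x y) \<le> 1 * ba_nrm T_alg x * ba_nrm T_alg y" if "x \<in> TC" "y \<in> TC" for x y
  proof -
    have "cmod (corner_form x y) \<le> bdnorm (fst (snd x)) * bdnorm (snd (snd y))"
      unfolding corner_form_def norm_mult using that eval by (simp add: mult_mono')
    also have "\<dots> \<le> ba_nrm T_alg x * ba_nrm T_alg y"
      using that by (intro mult_mono) (auto simp: bdnorm_nonneg)
    finally show ?thesis by simp
  qed
  moreover have "\<forall>x\<in>TC. \<forall>y\<in>TC. \<forall>z\<in>TC. \<forall>c.
      corner_form (ba_add T_alg x z) y = corner_form x y + corner_form z y \<and>
      corner_form x (ba_add T_alg y z) = corner_form x y + corner_form x z \<and>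
      corner_form (ba_smul T_alg c x) y = c * corner_form x y \<and>
      corner_form x (ba_smul T_alg c y) = c * corner_form x y"
    by (simp add: corner_form_def algebra_simps)
  ultimately show ?thesis unfolding bil_forms_def by blast
qed

lemma tproj_bimod_morph_E22:
  assumes \<rho>: "bimod_morph T_alg \<rho>"
  shows "snd (snd (tproj T_alg (\<rho> E22))) (\<lambda>_. 1) = 0"
proof -
  have tens: "\<rho> a \<in> ptens T_alg" if "a \<in> TC" for a
    using \<rho> that unfolding bimod_morph_def by blast
  have bimod: "\<rho> (ba_mul T_alg a b) = tl_act T_alg a (\<rho> b)" "\<rho> (ba_mul T_alg b a) = tr_act T_alg (\<rho> b) a"
    if "a \<in> TC" "b \<in> TC" for a b
    using \<rho> that unfolding bimod_morph_def by blast+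
  obtain xs ys where rep: "tens_rep T_alg xs ys" "\<rho> E11 = tens_of T_alg xs ys"
    using tens[OF matrix_units_closed(1)] unfolding ptens_def by blast
  obtain xs' ys' where rep': "tens_rep T_alg xs' ys'" "\<rho> E22 = tens_of T_alg xs' ys'"
    using tens[OF matrix_units_closed(3)] unfolding ptens_def by blast
  have right: "\<rho> E12 = tl_act T_alg E12 (\<rho> E22)"
    using bimod(1)[OF matrix_units_closed(2,3)] unfolding E12_mul_E22 .
  have left: "\<rho> E12 = tr_act T_alg (\<rho> E11) E12"
    using bimod(2)[OF matrix_units_closed(2,1)] unfolding E11_mul_E12 .
  have "snd (snd (tproj T_alg (\<rho> E22))) (\<lambda>_. 1) = \<rho> E22 (\<lambda>x y. snd (snd (ba_mul T_alg x y)) (\<lambda>_. 1))"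
    using tproj_ptens(2)[OF tens[OF matrix_units_closed(3)] lin_funcs_T_entries(3)[OF linf_const]] by simp
  also have "\<dots> = tens_of T_alg xs' ys' (\<lambda>x y. snd (snd (ba_mul T_alg x y)) (\<lambda>_. 1))"
    using rep'(2) by simp
  also have "\<dots> = tens_of T_alg xs' ys' (\<lambda>x y. corner_form (ba_mul T_alg E12 x) y)"
    by (rule tens_of_T_cong[OF rep'(1)])
       (simp add: corner_form_def E12_def arens_zero_left arens_const_one delta0_l1bidual
          arens_delta0_left linf_const delta0_const_one)
  also have "\<dots> = \<rho> E12 corner_form"
    using right rep'(2) corner_form_bil_forms by (simp add: tl_act_def del: T_mul T_carr_iff)
  also have "\<dots> = tens_of T_alg xs ys (\<lambda>x y. corner_form x (ba_mul T_alg y E12))"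
    using left rep(2) corner_form_bil_forms by (simp add: tr_act_def del: T_mul T_carr_iff)
  also have "\<dots> = tens_of T_alg xs ys (\<lambda>x y. 0)"
    by (rule tens_of_T_cong[OF rep(1)]) (simp add: corner_form_def E12_def arens_zero_right)
  also have "\<dots> = 0"
    by (simp add: tens_of_def)
  finally show ?thesis .
qed

lemma bimod_morph_E22_error_ge_1:
  assumes \<rho>: "bimod_morph T_alg \<rho>"
  shows "1 \<le> ba_nrm T_alg (ba_add T_alg (tproj T_alg (\<rho> E22)) (ba_smul T_alg (-1) E22))"
proof -
  define d where "d = ba_add T_alg (tproj T_alg (\<rho> E22)) (ba_smul T_alg (-1) E22)"
  have "\<rho> E22 \<in> ptens T_alg" using \<rho> matrix_units_closed unfolding bimod_morph_def by blast
  then have d: "d \<in> TC"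
    unfolding d_def using tproj_ptens(1) matrix_units_closed T_add_closed T_smul_closed by blast
  have "snd (snd d) (\<lambda>_. 1) = -1"
    using tproj_bimod_morph_E22[OF \<rho>] by (simp add: d_def E22_def delta0_const_one)
  then have "1 \<le> bdnorm (snd (snd d))"
    using bdnorm_upper[of "snd (snd d)" "\<lambda>_. 1"] linf_const supn_const[of 1] d by simp
  moreover have "0 \<le> bdnorm (fst d)" "0 \<le> bdnorm (fst (snd d))"
    using d bdnorm_nonneg by simp_all
  ultimately show ?thesis unfolding d_def[symmetric] by simp
qed

theorem mainTheorem9:
  shows "\<not> approx_biprojective T_alg"
proof
  assume "approx_biprojective T_alg"
  then obtain F where F: "F \<noteq> bot" "eventually (bimod_morph T_alg) F"
    and lim: "((\<lambda>\<rho>. ba_nrm T_alg (ba_add T_alg (tproj T_alg (\<rho> E22)) (ba_smul T_alg (-1) E22))) \<longlongrightarrow> 0) F"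
    unfolding approx_biprojective_def using matrix_units_closed(3) by blast
  have "eventually (\<lambda>\<rho>. ba_nrm T_alg (ba_add T_alg (tproj T_alg (\<rho> E22)) (ba_smul T_alg (-1) E22)) < 1) F"
    using order_tendstoD(2)[OF lim, of 1] by simp
  with F(2) have "eventually (\<lambda>\<rho>. False) F"
    by eventually_elim (use bimod_morph_E22_error_ge_1 in fastforce)
  with F(1) show False by (simp add: eventually_False)
qed

end
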